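(* Fix integers $n,d\ge 1$, constants $0<h_{min}<h_{max}$, an initial state $\mathcal{X}^{(0)}=[\mathbf{x}_1^{(0)},\ldots,\mathbf{x}_n^{(0)}]\in\mathbb{R}^{dn}$, an initial bandwidth $h_1\in[h_{min},h_{max}]$, and a non-negative sequence $(\nu_k)$ with $\nu_k\to 0$. Let $(\mathcal{X}^{(k)},h_k)$ be generated by the Doubly Stochastic Mean-Shift (DSMS) process described in the context. Then almost surely, for every $k\ge 1$, $$\mathbb{E}\left[L_{h_{k+1}}(\mathcal{X}^{(k+1)})\,\middle|\,\mathcal{X}^{(k)},\,h_k\right]\ \ge\ L_{h_k}(\mathcal{X}^{(k)}).$$ Consequently, the sequence $\left(L_{h_k}(\mathcal{X}^{(k)})\right)_k$ is a discrete-time non-negative submartingale adapted to the process $(\mathcal{X}^{(k)},h_k)$.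
   Context: A profile function is a map $k:[0,\infty)\to\mathbb{R}_+$ that vanishes on $[1,\infty)$, is $C^1$, non-increasing and convex, with $k'(t)<0$ for all $t\in[0,1)$ (e.g. $k(t)=(1-t)_+^{\alpha}$, $\alpha=2,3,4$). The associated kernel on $\mathbb{R}^d$ is $K(\mathbf{u})=k(\|\mathbf{u}\|^2)$ and the weight function is $G(\mathbf{u})=-k'(\|\mathbf{u}\|^2)\ge 0$; $\|\cdot\|$ is the Euclidean norm. A state is $\mathcal{X}=[\mathbf{x}_1,\ldots,\mathbf{x}_n]\in\mathbb{R}^{dn}$ with $\mathbf{x}_i\in\mathbb{R}^d$. For $h>0$ define the cost $L_h(\mathcal{X})=\sum_{1\le i\le j\le n}K\big((\mathbf{x}_i-\mathbf{x}_j)/h\big)$ and the mean-shift operator $$\mathcal{S}_h(x;\mathcal{X})=\frac{\sum_{i=1}^n G\big((x-\mathbf{x}_i)/h\big)\,\mathbf{x}_i}{\sum_{i=1}^n G\big((x-\mathbf{x}_i)/h\big)},\quad x\in\mathbb{R}^d.$$ DSMS process: given $\mathcal{X}^{(0)}$, $h_1\in[h_{min},h_{max}]$ and $(\nu_k)$, for $k=0,1,2,\ldots$: if $k\ge1$, set $\delta_k=\min\{\nu_k,\ (h_k/h_{min})^2-1,\ 1-(h_k/h_{max})^2\}$, draw $\alpha_k$ uniformly on $(1-\delta_k,1+\delta_k)$ (with $\alpha_k=1$ if $\delta_k=0$), and set $h_{k+1}=h_k/\sqrt{\alpha_k}$ (so $h_{k+1}\in[h_{min},h_{max}]$); draw an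 index $i_k$ uniformly from $\{1,\ldots,n\}$; then set $\mathbf{x}_{i_k}^{(k+1)}=\mathcal{S}_{h_{k+1}}(\mathbf{x}_{i_k}^{(k)};\mathcal{X}^{(k)})$ and $\mathbf{x}_j^{(k+1)}=\mathbf{x}_j^{(k)}$ for $j\ne i_k$. The indices $i_k$ are i.i.d., independent of each other and of all previous choices, and the sequences $(i_k)$ and $(h_k)$ are independent. *)

theory Defs
  imports "HOL-Probability.Probability"
begin

definition profile :: "(real \<Rightarrow> real) \<Rightarrow> (real \<Rightarrow> real) \<Rightarrow> bool" where
  "profile k k' \<longleftrightarrow>
     (\<forall>t\<ge>0. k t \<ge> 0) \<and>
     (\<forall>t\<ge>1. k t = 0) \<and>
     (\<forall>t\<ge>0. (k has_real_derivative k' t) (at t within {0..})) \<and>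
     continuous_on {0..} k' \<and>
     (\<forall>s t. 0 \<le> s \<longrightarrow> s \<le> t \<longrightarrow> k t \<le> k s) \<and>
     convex_on {0..} k \<and>
     (\<forall>t. 0 \<le> t \<longrightarrow> t < 1 \<longrightarrow> k' t < 0)"

definition kern :: "(real \<Rightarrow> real) \<Rightarrow> 'd::euclidean_space \<Rightarrow> real" where
  "kern k u = k (norm u ^ 2)"

definition weight :: "(real \<Rightarrow> real) \<Rightarrow> 'd::euclidean_space \<Rightarrow> real" where
  "weight k' u = - k' (norm u ^ 2)"

(* A state [x_1,...,x_n] in R^{dn}: points in 'd (R^d, d = DIM('d)) indexed by the
   finite type 'n (n = CARD('n)); the linear order on 'n only serves to express i \<le> j. *)

definition cost :: "(real \<Rightarrow> real) \<Rightarrow> real \<Rightarrow> ('d::euclidean_space)^('n::{finite,linorder}) \<Rightarrow> real" where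
  "cost k h X = (\<Sum>(i,j)\<in>{(i,j). i \<le> j}. kern k ((X$i - X$j) /\<^sub>R h))"

definition mean_shift :: "(real \<Rightarrow> real) \<Rightarrow> real \<Rightarrow> 'd::euclidean_space \<Rightarrow> 'd^('n::finite) \<Rightarrow> 'd" where
  "mean_shift k' h x X =
     (\<Sum>i\<in>UNIV. weight k' ((x - X$i) /\<^sub>R h) *\<^sub>R X$i) /\<^sub>R (\<Sum>i\<in>UNIV. weight k' ((x - X$i) /\<^sub>R h))"

(* Bandwidth sequence, as a function of the realisation u of the auxiliary uniform
   variables: alpha_k = 1 + delta_k * u_k with u_k uniform on (-1,1), so that alpha_k is
   uniform on (1-delta_k, 1+delta_k) given the past.  dsms_h (Suc k) = h_{k+1};
   dsms_h 0 = dsms_h 1 = h_1 (h_0 does not occur in the paper; it is a dummy). *)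
primrec dsms_h :: "real \<Rightarrow> real \<Rightarrow> (nat \<Rightarrow> real) \<Rightarrow> real \<Rightarrow> (nat \<Rightarrow> real) \<Rightarrow> nat \<Rightarrow> real" where
  "dsms_h hmin hmax \<nu> h1 u 0 = h1"
| "dsms_h hmin hmax \<nu> h1 u (Suc k) =
     (if k = 0 then h1 else
        (let hk = dsms_h hmin hmax \<nu> h1 u k;
             \<delta> = min (\<nu> k) (min ((hk / hmin)^2 - 1) (1 - (hk / hmax)^2));
             \<alpha> = 1 + \<delta> * u k
         in hk / sqrt \<alpha>))"

primrec dsms_X :: "(real \<Rightarrow> real) \<Rightarrow> real \<Rightarrow> real \<Rightarrow> (nat \<Rightarrow> real) \<Rightarrow> real \<Rightarrow>
    ('d::euclidean_space)^('n::finite) \<Rightarrow> (nat \<Rightarrow> real) \<Rightarrow> (nat \<Rightarrow> 'n) \<Rightarrow> nat \<Rightarrow> 'd^'n" where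
  "dsms_X k' hmin hmax \<nu> h1 X0 u ii 0 = X0"
| "dsms_X k' hmin hmax \<nu> h1 X0 u ii (Suc k) =
     (let Y = dsms_X k' hmin hmax \<nu> h1 X0 u ii k;
          h' = dsms_h hmin hmax \<nu> h1 u (Suc k)
      in (\<chi> j. if j = ii k then mean_shift k' h' (Y$(ii k)) Y else Y$j))"

definition submartingale_from :: "'a measure \<Rightarrow> nat \<Rightarrow> (nat \<Rightarrow> 'a measure) \<Rightarrow> (nat \<Rightarrow> 'a \<Rightarrow> real) \<Rightarrow> bool" where
  "submartingale_from M m F Y \<longleftrightarrow>
     (\<forall>k\<ge>m. sigma_finite_subalgebra M (F k)) \<and>
     (\<forall>k\<ge>m. sets (F k) \<subseteq> sets (F (Suc k))) \<and>
     (\<forall>k\<ge>m. Y k \<in> borel_measurable (F k)) \<and>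
     (\<forall>k\<ge>m. integrable M (Y k)) \<and>
     (\<forall>k\<ge>m. AE \<omega> in M. real_cond_exp M (F k) (Y (Suc k)) \<omega> \<ge> Y k \<omega>)"

end

theory Submission
  imports Defs
begin

(*
  One DSMS step first changes the bandwidth from h to h' = h / sqrt alpha and then replaces one
  point x_i by its mean shift S = S_h'(x_i; X). Convexity puts the profile above its tangents,
  k t - k s >= k' s * (t - s). On the pairs containing x_i this bounds the gain of the update from
  below by sum_b G_b (|x_i - x_b|^2 - |S - x_b|^2) / h'^2, which equals
  (sum_b G_b) |x_i - S|^2 / h'^2 >= 0 because S is the G-weighted mean of the points. With
  t = alpha s on every pair it gives L_h'(X) >= L_h(X) - (alpha - 1) C_h(X), where C_h(X) is the
  G-weighted sum of the squared scaled distances. Finally alpha - 1 = delta u with delta and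
  C_h(X) determined by the past and u centred and independent of the past, so the correction
  has conditional mean zero.
*)

section \<open>Profile functions and kernels\<close>

lemma profile_continuous_on:
  assumes "profile k k'"
  shows "continuous_on {0..} k"
proof -
  have "\<forall>t\<in>{0..}. continuous (at t within {0..}) k"
    using assms unfolding profile_def by (auto intro: DERIV_continuous)
  then show ?thesis
    using continuous_on_eq_continuous_within by blast
qed

lemma profile_above_tangent:
  assumes p: "profile k k'" and c: "0 \<le> c" and x: "0 \<le> x"
  shows "k' c * (x - c) \<le> k x - k c"
proof -
  have interior: "k' c * (x - c) \<le> k x - k c" if "0 < c" for c
    by (rule convex_on_imp_above_tangent[where A = "{0..}"])
       (use p that x in \<open>auto simp: profile_def\<close>)
  \<comment> \<open>The endpoint \<open>c = 0\<close> is not interior to \<open>[0,\<infinity>)\<close>; there we pass to the limit using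
      the continuity of \<open>k\<close> and \<open>k'\<close>.\<close>
  have "continuous_on (closure {0<..}) (\<lambda>c. k x - k c - k' c * (x - c))"
    using p profile_continuous_on[OF p] unfolding profile_def
    by (auto intro!: continuous_intros)
  then have "0 \<le> k x - k c - k' c * (x - c)"
    by (rule continuous_ge_on_closure) (use c interior in auto)
  then show ?thesis
    by simp
qed

lemma profile_nonneg: "profile k k' \<Longrightarrow> 0 \<le> t \<Longrightarrow> 0 \<le> k t"
  unfolding profile_def by auto

lemma profile_le_at_zero: "profile k k' \<Longrightarrow> 0 \<le> t \<Longrightarrow> k t \<le> k 0"
  unfolding profile_def by auto

lemma profile_deriv_nonpos:
  assumes p: "profile k k'" and c: "0 \<le> c"
  shows "k' c \<le> 0"
proof -
  have "k' c * ((c + 1) - c) \<le> k (c + 1) - k c"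
    by (rule profile_above_tangent[OF p c]) (use c in simp)
  moreover have "k (c + 1) \<le> k c"
    using p c unfolding profile_def by auto
  ultimately show ?thesis
    by simp
qed

lemma profile_abs_deriv_mult_le:
  assumes p: "profile k k'" and c: "0 \<le> c"
  shows "\<bar>k' c * c\<bar> \<le> k 0"
proof -
  have "k' c * (0 - c) \<le> k 0 - k c"
    using profile_above_tangent[OF p c, of 0] by simp
  moreover have "0 \<le> k c"
    using p c by (rule profile_nonneg)
  moreover have "k' c * c \<le> 0"
    using profile_deriv_nonpos[OF p c] c by (simp add: mult_nonpos_nonneg)
  ultimately show ?thesis
    by (simp add: abs_if algebra_simps)
qed

lemma kern_diff_commute: "kern k ((x - y) /\<^sub>R h) = kern k ((y - x) /\<^sub>R h)"
  unfolding kern_def by (simp add: norm_minus_commute)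

lemma kern_nonneg: "profile k k' \<Longrightarrow> 0 \<le> kern k v"
  unfolding kern_def by (rule profile_nonneg) auto

lemma kern_le_at_zero: "profile k k' \<Longrightarrow> kern k v \<le> k 0"
  unfolding kern_def by (rule profile_le_at_zero) auto

lemma weight_nonneg: "profile k k' \<Longrightarrow> 0 \<le> weight k' v"
  unfolding weight_def using profile_deriv_nonpos[of k k' "(norm v)\<^sup>2"] by auto

lemma weight_zero_pos: "profile k k' \<Longrightarrow> 0 < weight k' 0"
  unfolding weight_def profile_def by auto

lemma kern_above_tangent:
  assumes "profile k k'"
  shows "weight k' u * ((norm u)\<^sup>2 - (norm v)\<^sup>2) \<le> kern k v - kern k u"
  using profile_above_tangent[OF assms, of "(norm u)\<^sup>2" "(norm v)\<^sup>2"]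
  unfolding kern_def weight_def by (simp add: algebra_simps)

lemma weight_mult_norm_le:
  assumes "profile k k'"
  shows "weight k' u * (norm u)\<^sup>2 \<le> k 0"
  using profile_abs_deriv_mult_le[OF assms, of "(norm u)\<^sup>2"] unfolding weight_def by simp

lemma cost_nonneg: "profile k k' \<Longrightarrow> 0 \<le> cost k h X"
  unfolding cost_def by (rule sum_nonneg) (auto intro: kern_nonneg)

lemma cost_le:
  fixes X :: "('d::euclidean_space)^('n::{finite,linorder})"
  assumes "profile k k'"
  shows "cost k h X \<le> real (card {(a::'n, b). a \<le> b}) * k 0"
  unfolding cost_def by (rule sum_bounded_above) (auto intro: kern_le_at_zero[OF assms])

section \<open>Mean-shift ascent\<close>

lemma sum_weight_scaleR_mean_shift:
  fixes X :: "('d::euclidean_space)^('n::finite)"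
  assumes p: "profile k k'"
  shows "(\<Sum>b\<in>UNIV. weight k' ((X$i - X$b) /\<^sub>R h)) *\<^sub>R mean_shift k' h (X$i) X
    = (\<Sum>b\<in>UNIV. weight k' ((X$i - X$b) /\<^sub>R h) *\<^sub>R X$b)"
proof -
  have "0 < (\<Sum>b\<in>UNIV. weight k' ((X$i - X$b) /\<^sub>R h))"
    using weight_zero_pos[OF p] weight_nonneg[OF p] by (intro sum_pos2[where i = i]) auto
  then show ?thesis
    by (simp add: mean_shift_def)
qed

lemma sum_upper_pairs_eq_row:
  fixes d :: "'n::{finite,linorder} \<Rightarrow> 'n \<Rightarrow> 'a::comm_monoid_add"
  assumes sym: "\<And>a b. d a b = d b a"
    and off_row: "\<And>a b. a \<noteq> i \<Longrightarrow> b \<noteq> i \<Longrightarrow> d a b = 0"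
  shows "(\<Sum>(a, b)\<in>{(a, b). a \<le> b}. d a b) = (\<Sum>b\<in>UNIV. d i b)"
proof -
  let ?T = "Pair i ` {i..} \<union> (\<lambda>a. (a, i)) ` {..<i}"
  have "(\<Sum>(a, b)\<in>{(a, b). a \<le> b}. d a b) = (\<Sum>(a, b)\<in>?T. d a b)"
  proof (rule sum.mono_neutral_right)
    show "\<forall>x\<in>{(a, b). a \<le> b} - ?T. (case x of (a, b) \<Rightarrow> d a b) = 0"
    proof
      fix x
      assume x: "x \<in> {(a, b). a \<le> b} - ?T"
      obtain a b where [simp]: "x = (a, b)"
        by fastforce
      have "a \<noteq> i" and "b \<noteq> i"
        using x by (auto simp: image_iff)
      then show "(case x of (a, b) \<Rightarrow> d a b) = 0"
        by (simp add: off_row)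
    qed
  qed auto
  also have "\<dots> = (\<Sum>b\<in>{i..}. d i b) + (\<Sum>a\<in>{..<i}. d a i)"
    by (subst sum.union_disjoint) (auto simp: sum.reindex inj_on_def)
  also have "\<dots> = (\<Sum>b\<in>{i..} \<union> {..<i}. d i b)"
    by (subst sum.union_disjoint) (auto simp: sym)
  also have "{i..} \<union> {..<i} = UNIV"
    by auto
  finally show ?thesis .
qed

lemma sum_weighted_sq_dist_diff:
  fixes p q :: "'a::real_inner" and z :: "'i \<Rightarrow> 'a"
  assumes "(\<Sum>b\<in>S. G b) *\<^sub>R q = (\<Sum>b\<in>S. G b *\<^sub>R z b)"
  shows "(\<Sum>b\<in>S. G b * ((norm (p - z b))\<^sup>2 - (norm (q - z b))\<^sup>2))
           = (\<Sum>b\<in>S. G b) * (norm (p - q))\<^sup>2"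
proof -
  have expand: "(norm (p - z b))\<^sup>2 - (norm (q - z b))\<^sup>2
      = (norm (p - q))\<^sup>2 + 2 * ((p - q) \<bullet> (q - z b))" for b
    by (simp add: power2_norm_eq_inner inner_diff_left inner_diff_right inner_commute algebra_simps)
  have "(\<Sum>b\<in>S. G b * ((norm (p - z b))\<^sup>2 - (norm (q - z b))\<^sup>2))
      = (\<Sum>b\<in>S. G b * (norm (p - q))\<^sup>2 + 2 * (G b * ((p - q) \<bullet> (q - z b))))"
    unfolding expand by (simp add: algebra_simps)
  also have "\<dots> = (\<Sum>b\<in>S. G b) * (norm (p - q))\<^sup>2 + 2 * ((p - q) \<bullet> (\<Sum>b\<in>S. G b *\<^sub>R (q - z b)))"
    by (simp add: sum.distrib sum_distrib_left sum_distrib_right inner_sum_right)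
  also have "(\<Sum>b\<in>S. G b *\<^sub>R (q - z b)) = 0"
    using assms by (simp add: scaleR_diff_right sum_subtractf scaleR_sum_left)
  finally show ?thesis
    by simp
qed

lemma cost_le_cost_mean_shift_update:
  fixes X :: "('d::euclidean_space)^('n::{finite,linorder})"
  assumes p: "profile k k'"
  shows "cost k h X \<le> cost k h (\<chi> j. if j = i then mean_shift k' h (X$i) X else X$j)"
    (is "_ \<le> cost k h ?Y")
proof -
  define G where "G b = weight k' ((X$i - X$b) /\<^sub>R h)" for b
  define z where "z b = X$b /\<^sub>R h" for b
  let ?p = "X$i /\<^sub>R h" and ?q = "?Y$i /\<^sub>R h"
  have weight_sum: "sum G UNIV *\<^sub>R ?Y$i = (\<Sum>b\<in>UNIV. G b *\<^sub>R X$b)"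
    using sum_weight_scaleR_mean_shift[OF p] by (simp add: G_def)
  have "sum G UNIV *\<^sub>R ?q = inverse h *\<^sub>R (sum G UNIV *\<^sub>R ?Y$i)"
    by (simp add: mult.commute)
  also have "\<dots> = (\<Sum>b\<in>UNIV. G b *\<^sub>R z b)"
    unfolding weight_sum by (simp add: z_def scaleR_sum_right mult.commute)
  finally have weighted_mean: "sum G UNIV *\<^sub>R ?q = (\<Sum>b\<in>UNIV. G b *\<^sub>R z b)" .
  have "0 \<le> sum G UNIV * (norm (?p - ?q))\<^sup>2"
    unfolding G_def by (intro mult_nonneg_nonneg sum_nonneg weight_nonneg[OF p] zero_le_power2)
  also have "\<dots> = (\<Sum>b\<in>UNIV. G b * ((norm (?p - z b))\<^sup>2 - (norm (?q - z b))\<^sup>2))"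
    by (rule sum_weighted_sq_dist_diff[OF weighted_mean, symmetric])
  also have "\<dots> \<le> (\<Sum>b\<in>UNIV. kern k ((?Y$i - ?Y$b) /\<^sub>R h) - kern k ((X$i - X$b) /\<^sub>R h))"
  proof (rule sum_mono)
    fix b
    show "G b * ((norm (?p - z b))\<^sup>2 - (norm (?q - z b))\<^sup>2)
        \<le> kern k ((?Y$i - ?Y$b) /\<^sub>R h) - kern k ((X$i - X$b) /\<^sub>R h)"
    proof (cases "b = i")
      case True
      then show ?thesis
        by (simp add: G_def z_def mult_nonneg_nonneg weight_nonneg[OF p])
    next
      case False
      then show ?thesis
        using kern_above_tangent[OF p, of "?p - z b" "?q - z b"]
        by (simp add: G_def z_def scaleR_diff_right)
    qed
  qed
  also have "\<dots> = (\<Sum>(a, b)\<in>{(a, b). a \<le> b}.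
      kern k ((?Y$a - ?Y$b) /\<^sub>R h) - kern k ((X$a - X$b) /\<^sub>R h))"
    by (rule sum_upper_pairs_eq_row[symmetric]) (auto simp: kern_diff_commute)
  also have "\<dots> = cost k h ?Y - cost k h X"
    unfolding cost_def by (simp add: sum_subtractf case_prod_beta)
  finally show ?thesis
    by simp
qed

section \<open>Change of bandwidth\<close>

(* Minus the derivative of \<alpha> \<mapsto> L_{h/sqrt \<alpha>}(X) at \<alpha> = 1. *)
definition cost_slope :: "(real \<Rightarrow> real) \<Rightarrow> real \<Rightarrow> ('d::euclidean_space)^('n::{finite,linorder}) \<Rightarrow> real"
  where "cost_slope k' h X =
    (\<Sum>(a, b)\<in>{(a, b). a \<le> b}. weight k' ((X$a - X$b) /\<^sub>R h) * (norm ((X$a - X$b) /\<^sub>R h))\<^sup>2)"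

lemma norm_scaleR_div_sqrt_sq:
  fixes v :: "'a::real_normed_vector"
  assumes "0 < \<alpha>" "0 < h"
  shows "(norm (v /\<^sub>R (h / sqrt \<alpha>)))\<^sup>2 = \<alpha> * (norm (v /\<^sub>R h))\<^sup>2"
  using assms by (simp add: power_divide power_mult_distrib field_simps)

lemma cost_rescale_ge:
  fixes X :: "('d::euclidean_space)^('n::{finite,linorder})"
  assumes p: "profile k k'" and \<alpha>: "0 < \<alpha>" and h: "0 < h"
  shows "cost k h X - (\<alpha> - 1) * cost_slope k' h X \<le> cost k (h / sqrt \<alpha>) X"
proof -
  have tangent: "kern k (v /\<^sub>R h) - (\<alpha> - 1) * (weight k' (v /\<^sub>R h) * (norm (v /\<^sub>R h))\<^sup>2)
      \<le> kern k (v /\<^sub>R (h / sqrt \<alpha>))" for v :: 'd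
    using profile_above_tangent[OF p, of "(norm (v /\<^sub>R h))\<^sup>2" "\<alpha> * (norm (v /\<^sub>R h))\<^sup>2"] \<alpha>
    unfolding kern_def weight_def norm_scaleR_div_sqrt_sq[OF \<alpha> h]
    by (simp add: algebra_simps)
  have "cost k h X - (\<alpha> - 1) * cost_slope k' h X
      = (\<Sum>x\<in>{(a, b). a \<le> b}. kern k ((X$fst x - X$snd x) /\<^sub>R h)
          - (\<alpha> - 1) * (weight k' ((X$fst x - X$snd x) /\<^sub>R h) * (norm ((X$fst x - X$snd x) /\<^sub>R h))\<^sup>2))"
    unfolding cost_def cost_slope_def by (simp add: sum_distrib_left sum_subtractf case_prod_beta)
  also have "\<dots> \<le> cost k (h / sqrt \<alpha>) X"
    unfolding cost_def case_prod_beta by (rule sum_mono) (rule tangent)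
  finally show ?thesis .
qed

lemma abs_cost_slope_le:
  fixes X :: "('d::euclidean_space)^('n::{finite,linorder})"
  assumes p: "profile k k'"
  shows "\<bar>cost_slope k' h X\<bar> \<le> real (card {(a::'n, b). a \<le> b}) * k 0"
proof -
  have "0 \<le> cost_slope k' h X"
    unfolding cost_slope_def by (auto intro!: sum_nonneg mult_nonneg_nonneg weight_nonneg[OF p])
  moreover have "cost_slope k' h X \<le> real (card {(a::'n, b). a \<le> b}) * k 0"
    unfolding cost_slope_def case_prod_beta
    by (rule sum_bounded_above) (rule weight_mult_norm_le[OF p])
  ultimately show ?thesis
    by simp
qed

definition bandwidth_delta :: "real \<Rightarrow> real \<Rightarrow> real \<Rightarrow> real \<Rightarrow> real"
  where "bandwidth_delta hmin hmax \<nu> h = min \<nu> (min ((h / hmin)^2 - 1) (1 - (h / hmax)^2))"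

lemma bandwidth_delta_bounds:
  assumes "0 < hmin" "hmin \<le> h" "h \<le> hmax" "0 \<le> \<nu>"
  shows "0 \<le> bandwidth_delta hmin hmax \<nu> h"
    and "1 + bandwidth_delta hmin hmax \<nu> h \<le> (h / hmin)^2"
    and "(h / hmax)^2 \<le> 1 - bandwidth_delta hmin hmax \<nu> h"
    and "bandwidth_delta hmin hmax \<nu> h < 1"
proof -
  have "1 \<le> h / hmin" and "0 < h / hmax" and "h / hmax \<le> 1"
    using assms by auto
  then have "1 \<le> (h / hmin)^2" and "0 < (h / hmax)^2" and "(h / hmax)^2 \<le> 1"
    by (auto simp: one_le_power power_le_one)
  then show "0 \<le> bandwidth_delta hmin hmax \<nu> h"
    using assms(4) unfolding bandwidth_delta_def by auto
  show "1 + bandwidth_delta hmin hmax \<nu> h \<le> (h / hmin)^2"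
    unfolding bandwidth_delta_def by auto
  show le: "(h / hmax)^2 \<le> 1 - bandwidth_delta hmin hmax \<nu> h"
    unfolding bandwidth_delta_def by auto
  show "bandwidth_delta hmin hmax \<nu> h < 1"
    using le \<open>0 < (h / hmax)^2\<close> by linarith
qed

lemma bandwidth_step_bounds:
  assumes hmin: "0 < hmin" and h: "hmin \<le> h" "h \<le> hmax" and \<nu>: "0 \<le> \<nu>" and u: "\<bar>u\<bar> < 1"
  defines "\<alpha> \<equiv> 1 + bandwidth_delta hmin hmax \<nu> h * u"
  shows "0 < \<alpha>" and "hmin \<le> h / sqrt \<alpha>" and "h / sqrt \<alpha> \<le> hmax"
proof -
  note \<delta> = bandwidth_delta_bounds[OF hmin h \<nu>]
  have "\<bar>bandwidth_delta hmin hmax \<nu> h * u\<bar> \<le> bandwidth_delta hmin hmax \<nu> h"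
    using \<delta>(1) u by (simp add: abs_mult mult_left_le)
  then have \<alpha>_le: "\<alpha> \<le> (h / hmin)^2" and le_\<alpha>: "(h / hmax)^2 \<le> \<alpha>" and "0 < \<alpha>"
    using \<delta> unfolding \<alpha>_def by (auto simp: abs_le_iff)
  then show "0 < \<alpha>"
    by simp
  have "sqrt \<alpha> \<le> h / hmin"
    by (rule real_le_lsqrt[OF _ \<alpha>_le]) (use hmin h in simp)
  then show "hmin \<le> h / sqrt \<alpha>"
    using hmin \<open>0 < \<alpha>\<close> by (simp add: field_simps)
  have "h / hmax \<le> sqrt \<alpha>"
    by (rule real_le_rsqrt[OF le_\<alpha>])
  then show "h / sqrt \<alpha> \<le> hmax"
    using hmin h \<open>0 < \<alpha>\<close> by (simp add: field_simps)
qed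

lemma dsms_h_Suc:
  "1 \<le> j \<Longrightarrow> dsms_h hmin hmax \<nu> h1 u (Suc j) =
     dsms_h hmin hmax \<nu> h1 u j / sqrt (1 + bandwidth_delta hmin hmax (\<nu> j) (dsms_h hmin hmax \<nu> h1 u j) * u j)"
  by (simp add: bandwidth_delta_def Let_def)

lemma dsms_h_bounds:
  assumes "0 < hmin" "hmin \<le> h1" "h1 \<le> hmax" "\<forall>j. 0 \<le> \<nu> j" "\<forall>m. \<bar>u m\<bar> < 1"
  shows "hmin \<le> dsms_h hmin hmax \<nu> h1 u j \<and> dsms_h hmin hmax \<nu> h1 u j \<le> hmax"
proof (induction j)
  case (Suc j)
  show ?case
  proof (cases "j = 0")
    case False
    then have "1 \<le> j"
      by simp
    then show ?thesis
      unfolding dsms_h_Suc[OF \<open>1 \<le> j\<close>]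
      using bandwidth_step_bounds[OF assms(1) _ _ _ assms(5)[rule_format, of j]] Suc assms(4)
      by simp
  qed (use assms in simp)
qed (use assms in simp)

section \<open>Measurability\<close>

lemma borel_measurable_vec_nth [measurable (raw)]:
  fixes f :: "'a \<Rightarrow> 'b::{real_normed_vector,second_countable_topology}^'n"
  shows "f \<in> borel_measurable M \<Longrightarrow> (\<lambda>x. f x $ i) \<in> borel_measurable M"
  by (rule borel_measurable_continuous_on[where f = "\<lambda>x. x $ i"])
     (auto intro: linear_continuous_on bounded_linear_vec_nth)

lemma borel_measurable_vec_lambda:
  fixes f :: "'a \<Rightarrow> 'n::finite \<Rightarrow> 'b::euclidean_space"
  assumes "\<And>j. (\<lambda>x. f x j) \<in> borel_measurable M"
  shows "(\<lambda>x. \<chi> j. f x j) \<in> borel_measurable M"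
  unfolding borel_measurable_euclidean_space[where 'c = "'b^'n"]
  using assms by (auto simp: Basis_vec_def inner_axis)

lemma borel_measurable_kern:
  assumes "profile k k'"
  shows "kern k \<in> borel_measurable (borel :: 'a::euclidean_space measure)"
proof -
  have "continuous_on UNIV (\<lambda>u::'a. k ((norm u)\<^sup>2))"
    by (rule continuous_on_compose2[OF profile_continuous_on[OF assms]])
       (auto intro!: continuous_intros)
  then show ?thesis
    unfolding kern_def[abs_def] by (rule borel_measurable_continuous_onI)
qed

lemma borel_measurable_weight:
  assumes "profile k k'"
  shows "weight k' \<in> borel_measurable (borel :: 'a::euclidean_space measure)"
proof -
  have "continuous_on {0..} k'"
    using assms unfolding profile_def by simp
  then have "continuous_on UNIV (\<lambda>u::'a. k' ((norm u)\<^sup>2))"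
    by (rule continuous_on_compose2) (auto intro!: continuous_intros)
  then have "continuous_on UNIV (\<lambda>u::'a. - k' ((norm u)\<^sup>2))"
    by (intro continuous_intros)
  then show ?thesis
    unfolding weight_def[abs_def] by (rule borel_measurable_continuous_onI)
qed

lemma borel_measurable_cost:
  fixes Y :: "'a \<Rightarrow> ('d::euclidean_space)^('n::{finite,linorder})"
  assumes p: "profile k k'" and [measurable]: "H \<in> borel_measurable N" "Y \<in> borel_measurable N"
  shows "(\<lambda>\<omega>. cost k (H \<omega>) (Y \<omega>)) \<in> borel_measurable N"
proof -
  note [measurable] = borel_measurable_kern[OF p, where 'a = 'd]
  show ?thesis
    unfolding cost_def case_prod_beta by measurable
qed

lemma borel_measurable_cost_slope:
  fixes Y :: "'a \<Rightarrow> ('d::euclidean_space)^('n::{finite,linorder})"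
  assumes p: "profile k k'" and [measurable]: "H \<in> borel_measurable N" "Y \<in> borel_measurable N"
  shows "(\<lambda>\<omega>. cost_slope k' (H \<omega>) (Y \<omega>)) \<in> borel_measurable N"
proof -
  note [measurable] = borel_measurable_weight[OF p, where 'a = 'd]
  show ?thesis
    unfolding cost_slope_def case_prod_beta by measurable
qed

lemma borel_measurable_mean_shift:
  fixes Y :: "'a \<Rightarrow> ('d::euclidean_space)^('n::finite)"
  assumes p: "profile k k'"
    and [measurable]: "H \<in> borel_measurable N" "x \<in> borel_measurable N" "Y \<in> borel_measurable N"
  shows "(\<lambda>\<omega>. mean_shift k' (H \<omega>) (x \<omega>) (Y \<omega>)) \<in> borel_measurable N"
proof -
  note [measurable] = borel_measurable_weight[OF p, where 'a = 'd]
  show ?thesis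
    unfolding mean_shift_def by measurable
qed

lemma borel_measurable_dsms_h:
  assumes "\<And>m. m < j \<Longrightarrow> U m \<in> borel_measurable N"
  shows "(\<lambda>\<omega>. dsms_h hmin hmax \<nu> h1 (\<lambda>m. U m \<omega>) j) \<in> borel_measurable N"
  using assms
proof (induction j)
  case (Suc j)
  then have [measurable]: "(\<lambda>\<omega>. dsms_h hmin hmax \<nu> h1 (\<lambda>m. U m \<omega>) j) \<in> borel_measurable N"
    and [measurable]: "U j \<in> borel_measurable N"
    by simp_all
  show ?case
    by (cases "j = 0") (simp_all add: Let_def, measurable)
qed simp

lemma borel_measurable_dsms_X:
  fixes X0 :: "('d::euclidean_space)^('n::finite)"
  assumes p: "profile k k'"
    and U: "\<And>m. m < j \<Longrightarrow> U m \<in> borel_measurable N"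
    and I: "\<And>m. m < j \<Longrightarrow> I m \<in> measurable N (count_space UNIV)"
  shows "(\<lambda>\<omega>. dsms_X k' hmin hmax \<nu> h1 X0 (\<lambda>m. U m \<omega>) (\<lambda>m. I m \<omega>) j) \<in> borel_measurable N"
  using U I
proof (induction j)
  case (Suc j)
  let ?Y = "\<lambda>\<omega>. dsms_X k' hmin hmax \<nu> h1 X0 (\<lambda>m. U m \<omega>) (\<lambda>m. I m \<omega>) j"
  let ?H = "\<lambda>\<omega>. dsms_h hmin hmax \<nu> h1 (\<lambda>m. U m \<omega>) (Suc j)"
  have [measurable]: "?Y \<in> borel_measurable N"
    using Suc by simp
  have [measurable]: "?H \<in> borel_measurable N"
    by (rule borel_measurable_dsms_h) (use Suc in simp)
  have update: "(\<lambda>\<omega>. \<chi> j'. if j' = i then mean_shift k' (?H \<omega>) (?Y \<omega> $ i) (?Y \<omega>) else ?Y \<omega> $ j')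
          \<in> borel_measurable N" for i
  proof (rule borel_measurable_vec_lambda)
    have [measurable]: "(\<lambda>\<omega>. mean_shift k' (?H \<omega>) (?Y \<omega> $ i) (?Y \<omega>)) \<in> borel_measurable N"
      by (rule borel_measurable_mean_shift[OF p]) measurable
    show "(\<lambda>\<omega>. if j' = i then mean_shift k' (?H \<omega>) (?Y \<omega> $ i) (?Y \<omega>) else ?Y \<omega> $ j')
          \<in> borel_measurable N" for j'
      by (cases "j' = i") (simp_all del: dsms_h.simps)
  qed
  have "I j \<in> measurable N (count_space UNIV)"
    using Suc by simp
  then show ?case
    unfolding dsms_X.simps Let_def by (rule measurable_compose_countable'[OF update]) simp
qed simp

lemma borel_measurable_Pair_iff:
  fixes f :: "'a \<Rightarrow> 'b::second_countable_topology" and g :: "'a \<Rightarrow> 'c::second_countable_topology"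
  shows "(\<lambda>x. (f x, g x)) \<in> borel_measurable M \<longleftrightarrow> f \<in> borel_measurable M \<and> g \<in> borel_measurable M"
  using measurable_pair_iff[of "\<lambda>x. (f x, g x)" M borel borel] by (simp add: borel_prod comp_def)

section \<open>Independence and conditional expectation\<close>

lemma integral_uniform_measure_pm1_id: "(\<integral>x. x \<partial>uniform_measure lborel {-1<..<(1::real)}) = 0"
proof -
  let ?S = "{-1<..<(1::real)}"
  have density: "uniform_measure lborel ?S = density lborel (\<lambda>x. ennreal (indicator ?S x / 2))"
    unfolding uniform_measure_def
    by (intro arg_cong2[where f = density] refl ext)
       (simp add: divide_ennreal[symmetric] split: split_indicator)
  have "(\<integral>x. indicator ?S x / 2 * x \<partial>lborel)
      = \<bar>-1\<bar> *\<^sub>R (\<integral>x. indicator ?S (0 + (-1) * x) / 2 * (0 + (-1) * x) \<partial>lborel)"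
    by (rule lborel_integral_real_affine) simp
  also have "\<dots> = - (\<integral>x. indicator ?S x / 2 * x \<partial>lborel)"
    by (simp add: indicator_def conj_commute)
  finally have "(\<integral>x. indicator ?S x / 2 * x \<partial>lborel) = 0"
    by linarith
  then show ?thesis
    unfolding density by (subst integral_density) auto
qed

lemma (in prob_space) uniform_pm1_bounded_centred:
  fixes X :: "'a \<Rightarrow> real"
  assumes X: "X \<in> borel_measurable M" and distr: "distr M borel X = uniform_measure lborel {-1<..<1}"
  shows "AE \<omega> in M. X \<omega> \<in> {-1<..<1}" and "integrable M X" and "expectation X = 0"
proof -
  show AE: "AE \<omega> in M. X \<omega> \<in> {-1<..<1}"
  proof (rule AE_distrD[OF X])
    show "AE x in distr M borel X. x \<in> {-1<..<1}"
      unfolding distr by (rule AE_uniform_measureI) (simp_all add: greaterThanLessThan_borel)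
  qed
  show "integrable M X"
    by (rule integrable_const_bound[where B = 1]) (use AE X in auto)
  have "expectation X = (\<integral>x. x \<partial>distr M borel X)"
    by (subst integral_distr[OF X]) auto
  then show "expectation X = 0"
    unfolding distr using integral_uniform_measure_pm1_id by simp
qed

lemma Int_stable_vimages: "Int_stable {f -` A \<inter> S | A. A \<in> sets N}"
proof (rule Int_stableI)
  fix a b
  assume "a \<in> {f -` A \<inter> S | A. A \<in> sets N}" "b \<in> {f -` A \<inter> S | A. A \<in> sets N}"
  then obtain A B where "a = f -` A \<inter> S" "A \<in> sets N" "b = f -` B \<inter> S" "B \<in> sets N"
    by auto
  then show "a \<inter> b \<in> {f -` A \<inter> S | A. A \<in> sets N}"
    by (intro CollectI exI[of _ "A \<inter> B"]) auto
qed

lemma (in prob_space) indep_set_sigma_Int_generator: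
  assumes AB: "indep_set A B" and DC: "indep_set D C"
    and AD: "A \<subseteq> D" and BD: "B \<subseteq> D" and D: "Int_stable D"
    and A: "Int_stable A" and B: "Int_stable B" and C: "Int_stable C"
  shows "indep_set (sigma_sets (space M) A) (sigma_sets (space M) {b \<inter> c | b c. b \<in> B \<and> c \<in> C})"
proof (rule indep_set_sigma_sets)
  let ?BC = "{b \<inter> c | b c. b \<in> B \<and> c \<in> C}"
  show "indep_set A ?BC"
  proof (rule indep_setI)
    show "A \<subseteq> events"
      by (rule indep_setD_ev1[OF AB])
    show "?BC \<subseteq> events"
      using indep_setD_ev2[OF AB] indep_setD_ev2[OF DC] by (auto intro!: sets.Int)
  next
    fix a x
    assume a: "a \<in> A" and "x \<in> ?BC"
    then obtain b c where x: "x = b \<inter> c" and b: "b \<in> B" and c: "c \<in> C"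
      by auto
    have "b \<in> D" and "a \<inter> b \<in> D"
      using AD BD a b by (auto intro: Int_stableD[OF D])
    have "prob (a \<inter> x) = prob ((a \<inter> b) \<inter> c)"
      by (simp add: x Int_assoc)
    also have "\<dots> = prob (a \<inter> b) * prob c"
      by (rule indep_setD[OF DC \<open>a \<inter> b \<in> D\<close> c])
    also have "\<dots> = prob a * (prob b * prob c)"
      using indep_setD[OF AB a b] by simp
    also have "prob b * prob c = prob x"
      unfolding x by (rule indep_setD[OF DC \<open>b \<in> D\<close> c, symmetric])
    finally show "prob (a \<inter> x) = prob a * prob x" .
  qed
  show "Int_stable ?BC"
  proof (rule Int_stableI)
    fix x y
    assume "x \<in> ?BC" "y \<in> ?BC"
    then obtain b1 c1 b2 c2 where "x = b1 \<inter> c1" "y = b2 \<inter> c2" "b1 \<in> B" "c1 \<in> C" "b2 \<in> B" "c2 \<in> C"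
      by auto
    then show "x \<inter> y \<in> ?BC"
      by (intro CollectI exI[of _ "b1 \<inter> b2"] exI[of _ "c1 \<inter> c2"])
         (auto intro: Int_stableD[OF B] Int_stableD[OF C])
  qed
qed (rule A)

lemma (in prob_space) indep_set_vimages_prefix:
  fixes U :: "nat \<Rightarrow> 'a \<Rightarrow> 'b"
  assumes "indep_vars (\<lambda>_. N) U UNIV"
  shows "indep_set {U j -` A \<inter> space M | A. A \<in> sets N}
           (sigma_sets (space M) (\<Union>m<j. {U m -` A \<inter> space M | A. A \<in> sets N}))"
proof -
  define E where "E m = {U m -` A \<inter> space M | A. A \<in> sets N}" for m
  have "indep_sets E UNIV"
    using assms unfolding indep_vars_def2 E_def by auto
  then have "indep_sets E (\<Union>b. if b then {j} else {..<j})"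
    by (rule indep_sets_mono_index[rotated]) simp
  then have "indep_sets (\<lambda>b. sigma_sets (space M) (\<Union>m\<in>(if b then {j} else {..<j}). E m)) UNIV"
    by (rule indep_sets_collect_sigma) (auto simp: E_def Int_stable_vimages disjoint_family_on_def)
  then show ?thesis
    unfolding indep_set_def E_def[symmetric]
    by (rule indep_sets_mono_sets) (auto split: bool.split intro: sigma_sets.Basic)
qed

lemma (in prob_space) indep_set_vimage_past:
  fixes U :: "nat \<Rightarrow> 'a \<Rightarrow> real" and I :: "nat \<Rightarrow> 'a \<Rightarrow> 'i"
  assumes U_indep: "indep_vars (\<lambda>_. borel) U UNIV"
    and UI_indep: "indep_set
      (sets (vimage_algebra (space M) (\<lambda>\<omega> j. U j \<omega>) (Pi\<^sub>M UNIV (\<lambda>_. borel))))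
      (sets (vimage_algebra (space M) (\<lambda>\<omega> j. I j \<omega>) (Pi\<^sub>M UNIV (\<lambda>_. count_space UNIV))))"
  shows "indep_set (sigma_sets (space M) {U j -` A \<inter> space M | A. A \<in> sets borel})
    (sigma_sets (space M) {b \<inter> c | b c.
      b \<in> sigma_sets (space M) (\<Union>m<j. {U m -` A \<inter> space M | A. A \<in> sets borel}) \<and>
      c \<in> sets (vimage_algebra (space M) (\<lambda>\<omega> j. I j \<omega>) (Pi\<^sub>M UNIV (\<lambda>_. count_space UNIV)))})"
proof -
  define E where "E m = {U m -` A \<inter> space M | A. A \<in> sets borel}" for m
  define VU where "VU = vimage_algebra (space M) (\<lambda>\<omega> j. U j \<omega>) (Pi\<^sub>M UNIV (\<lambda>_. borel :: real measure))"
  define SB where "SB = sigma_sets (space M) (\<Union>m<j. E m)"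
  have U_VU: "U m \<in> borel_measurable VU" for m
  proof -
    have "(\<lambda>\<omega> j. U j \<omega>) \<in> measurable VU (Pi\<^sub>M UNIV (\<lambda>_. borel))"
      unfolding VU_def by (rule measurable_vimage_algebra1) (auto simp: space_PiM)
    from measurable_compose[OF this measurable_component_singleton[of m]] show ?thesis
      by (simp add: comp_def)
  qed
  have E_VU: "E m \<subseteq> sets VU" for m
    using measurable_sets[OF U_VU[of m]] unfolding E_def VU_def by auto
  then have "sigma_sets (space VU) (\<Union>m<j. E m) \<subseteq> sets VU"
    by (intro sets.sigma_sets_subset) blast
  then have SB_VU: "SB \<subseteq> sets VU"
    unfolding SB_def VU_def by simp
  interpret SB: sigma_algebra "space M" SB
    unfolding SB_def by (rule sigma_algebra_sigma_sets) (auto simp: E_def)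
  have "indep_set (E j) SB"
    unfolding E_def SB_def by (rule indep_set_vimages_prefix[OF U_indep])
  then have "indep_set (sigma_sets (space M) (E j))
      (sigma_sets (space M) {b \<inter> c | b c. b \<in> SB \<and> c \<in> sets (vimage_algebra (space M)
        (\<lambda>\<omega> j. I j \<omega>) (Pi\<^sub>M UNIV (\<lambda>_. count_space UNIV)))})"
    by (rule indep_set_sigma_Int_generator[OF _ UI_indep[folded VU_def] E_VU SB_VU])
       (auto simp: E_def sets.Int_stable SB.Int_stable Int_stable_vimages)
  then show ?thesis
    by (simp only: E_def SB_def)
qed

lemma (in prob_space) indep_var_past:
  fixes U :: "nat \<Rightarrow> 'a \<Rightarrow> real" and I :: "nat \<Rightarrow> 'a \<Rightarrow> 'i"
  assumes U_indep: "indep_vars (\<lambda>_. borel) U UNIV"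
    and UI_indep: "indep_set
      (sets (vimage_algebra (space M) (\<lambda>\<omega> j. U j \<omega>) (Pi\<^sub>M UNIV (\<lambda>_. borel))))
      (sets (vimage_algebra (space M) (\<lambda>\<omega> j. I j \<omega>) (Pi\<^sub>M UNIV (\<lambda>_. count_space UNIV))))"
  obtains N where "subalgebra M N"
    and "\<And>m. m < j \<Longrightarrow> U m \<in> borel_measurable N"
    and "\<And>m. I m \<in> measurable N (count_space UNIV)"
    and "\<And>g :: 'a \<Rightarrow> real. g \<in> borel_measurable N \<Longrightarrow> indep_var borel (U j) borel g"
proof -
  define VI where
    "VI = vimage_algebra (space M) (\<lambda>\<omega> j. I j \<omega>) (Pi\<^sub>M UNIV (\<lambda>_. count_space (UNIV :: 'i set)))"
  define SB where "SB = sigma_sets (space M) (\<Union>m<j. {U m -` A \<inter> space M | A. A \<in> sets borel})"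
  define G where "G = {b \<inter> c | b c. b \<in> SB \<and> c \<in> sets VI}"
  define N where "N = sigma (space M) G"
  have indep: "indep_set (sigma_sets (space M) {U j -` A \<inter> space M | A. A \<in> sets borel}) (sigma_sets (space M) G)"
    using indep_set_vimage_past[OF U_indep UI_indep] unfolding G_def SB_def VI_def .
  then have "G \<subseteq> events"
    using indep_setD_ev2 by (blast intro: sigma_sets.Basic)
  then have "G \<subseteq> Pow (space M)"
    using sets.sets_into_space by blast
  then have space_N: "space N = space M" and sets_N: "sets N = sigma_sets (space M) G"
    unfolding N_def by simp_all
  interpret SB: sigma_algebra "space M" SB
    unfolding SB_def by (rule sigma_algebra_sigma_sets) auto
  have VI_top: "space M \<in> sets VI"
    using sets.top[of VI] by (simp add: VI_def)
  show ?thesis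
  proof
    show sub: "subalgebra M N"
      using indep_setD_ev2[OF indep] unfolding subalgebra_def space_N sets_N by simp
    show "U m \<in> borel_measurable N" if "m < j" for m
    proof (rule measurableI)
      fix A :: "real set"
      assume "A \<in> sets borel"
      then have "U m -` A \<inter> space M \<in> SB"
        unfolding SB_def using that by (intro sigma_sets.Basic) blast
      then have "(U m -` A \<inter> space M) \<inter> space M \<in> G"
        unfolding G_def using VI_top by blast
      then show "U m -` A \<inter> space N \<in> sets N"
        unfolding sets_N space_N by auto
    qed simp
    show "I m \<in> measurable N (count_space UNIV)" for m
    proof (rule measurableI)
      fix A :: "'i set"
      have "(\<lambda>\<omega> j. I j \<omega>) \<in> measurable VI (Pi\<^sub>M UNIV (\<lambda>_. count_space UNIV))"
        unfolding VI_def by (rule measurable_vimage_algebra1) (auto simp: space_PiM)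
      from measurable_sets[OF measurable_compose[OF this measurable_component_singleton[of m]]]
      have "I m -` A \<inter> space M \<in> sets VI"
        by (simp add: VI_def comp_def)
      then have "space M \<inter> (I m -` A \<inter> space M) \<in> G"
        unfolding G_def using SB.top by blast
      then show "I m -` A \<inter> space N \<in> sets N"
        unfolding sets_N space_N by (auto simp: Int_absorb1)
    qed simp
    show "indep_var borel (U j) borel g" if g: "g \<in> borel_measurable N" for g :: "'a \<Rightarrow> real"
      unfolding indep_var_eq
    proof (intro conjI)
      show "random_variable borel (U j)"
        using U_indep unfolding indep_vars_def2 by simp
      show "random_variable borel g"
        by (rule measurable_from_subalg[OF sub g])
      have "{g -` A \<inter> space M | A. A \<in> sets borel} \<subseteq> sets N"
        using measurable_sets[OF g] space_N by auto
      then have "sigma_sets (space M) {g -` A \<inter> space M | A. A \<in> sets borel} \<subseteq> sigma_sets (space M) G"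
        using sets.sigma_sets_subset[of _ N] unfolding space_N sets_N by simp
      then show "indep_set (sigma_sets (space M) {U j -` A \<inter> space M | A. A \<in> sets borel})
          (sigma_sets (space M) {g -` A \<inter> space M | A. A \<in> sets borel})"
        using indep unfolding indep_sets2_eq by blast
    qed
  qed
qed

lemma (in sigma_finite_subalgebra) real_cond_exp_ge_of_le_centred:
  fixes f g D :: "'a \<Rightarrow> real"
  assumes f: "integrable M f" and g: "integrable M g" "g \<in> borel_measurable F"
    and D: "integrable M D"
    and centred: "\<And>A. A \<in> sets F \<Longrightarrow> (\<integral>\<omega>. indicator A \<omega> * D \<omega> \<partial>M) = 0"
    and le: "AE \<omega> in M. g \<omega> + D \<omega> \<le> f \<omega>"
  shows "AE \<omega> in M. g \<omega> \<le> real_cond_exp M F f \<omega>"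
proof -
  have "AE \<omega> in M. real_cond_exp M F D \<omega> = 0"
  proof (rule real_cond_exp_charact)
    show "(\<integral>\<omega>\<in>A. D \<omega> \<partial>M) = (\<integral>\<omega>\<in>A. 0 \<partial>M)" if "A \<in> sets F" for A
      using centred[OF that] unfolding set_lebesgue_integral_def by simp
  qed (simp_all add: D)
  moreover have "AE \<omega> in M. real_cond_exp M F (\<lambda>\<omega>. g \<omega> + D \<omega>) \<omega>
      = real_cond_exp M F g \<omega> + real_cond_exp M F D \<omega>"
    by (rule real_cond_exp_add[OF g(1) D])
  moreover have "AE \<omega> in M. real_cond_exp M F g \<omega> = g \<omega>"
    by (rule real_cond_exp_F_meas[OF g])
  moreover have "AE \<omega> in M. real_cond_exp M F (\<lambda>\<omega>. g \<omega> + D \<omega>) \<omega> \<le> real_cond_exp M F f \<omega>"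
    by (rule real_cond_exp_mono[OF le Bochner_Integration.integrable_add[OF g(1) D] f])
  ultimately show ?thesis
    by eventually_elim simp
qed

lemma (in prob_space) sigma_finite_subalgebra_of_subalgebra:
  assumes "subalgebra M F"
  shows "sigma_finite_subalgebra M F"
  by (rule finite_measure_subalgebra_is_sigma_finite)
     (simp add: finite_measure_subalgebra_def finite_measure_subalgebra_axioms_def assms finite_measure_axioms)

section \<open>The DSMS process\<close>

lemma dsms_cost_step_ge:
  fixes X0 :: "('d::euclidean_space)^('n::{finite,linorder})" and ii :: "nat \<Rightarrow> 'n"
  assumes p: "profile k k'" and hmin: "0 < hmin" and h1: "hmin \<le> h1" "h1 \<le> hmax"
    and \<nu>: "\<forall>j. 0 \<le> \<nu> j" and u: "\<forall>m. \<bar>u m\<bar> < 1" and j: "1 \<le> j"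
  defines "h \<equiv> dsms_h hmin hmax \<nu> h1 u" and "X \<equiv> dsms_X k' hmin hmax \<nu> h1 X0 u ii"
  shows "cost k (h j) (X j) - bandwidth_delta hmin hmax (\<nu> j) (h j) * u j * cost_slope k' (h j) (X j)
           \<le> cost k (h (Suc j)) (X (Suc j))"
proof -
  define \<alpha> where "\<alpha> = 1 + bandwidth_delta hmin hmax (\<nu> j) (h j) * u j"
  have h_j: "hmin \<le> h j" "h j \<le> hmax"
    using dsms_h_bounds[OF hmin h1 \<nu> u] unfolding h_def by auto
  have "0 < \<alpha>"
    unfolding \<alpha>_def by (rule bandwidth_step_bounds(1)[OF hmin h_j \<nu>[rule_format] u[rule_format]])
  have h_Suc: "h (Suc j) = h j / sqrt \<alpha>"
    unfolding h_def \<alpha>_def by (rule dsms_h_Suc[OF j])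
  have X_Suc: "X (Suc j) =
      (\<chi> i. if i = ii j then mean_shift k' (h (Suc j)) (X j $ ii j) (X j) else X j $ i)"
    unfolding X_def h_def by (simp only: dsms_X.simps Let_def)
  have "cost k (h j) (X j) - (\<alpha> - 1) * cost_slope k' (h j) (X j) \<le> cost k (h (Suc j)) (X j)"
    unfolding h_Suc by (rule cost_rescale_ge[OF p \<open>0 < \<alpha>\<close>]) (use h_j hmin in simp)
  also have "\<dots> \<le> cost k (h (Suc j)) (X (Suc j))"
    unfolding X_Suc by (rule cost_le_cost_mean_shift_update[OF p])
  finally show ?thesis
    by (simp add: \<alpha>_def)
qed

locale dsms = prob_space M
  for M :: "'a measure" +
  fixes k k' :: "real \<Rightarrow> real" and hmin hmax h1 :: real and \<nu> :: "nat \<Rightarrow> real"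
    and X0 :: "('d::euclidean_space)^('n::{finite,linorder})"
    and U :: "nat \<Rightarrow> 'a \<Rightarrow> real" and I :: "nat \<Rightarrow> 'a \<Rightarrow> 'n"
  assumes profile: "profile k k'"
    and hmin_pos: "0 < hmin" and h1_bounds: "hmin \<le> h1" "h1 \<le> hmax"
    and \<nu>_nonneg: "\<forall>j. 0 \<le> \<nu> j"
    and U_measurable: "\<And>j. U j \<in> borel_measurable M"
    and U_uniform: "\<And>j. distr M borel (U j) = uniform_measure lborel {-1<..<1}"
    and I_measurable: "\<And>j. I j \<in> measurable M (count_space UNIV)"
    and U_indep: "indep_vars (\<lambda>_. borel) U UNIV"
    and UI_indep: "indep_set
      (sets (vimage_algebra (space M) (\<lambda>\<omega> j. U j \<omega>) (Pi\<^sub>M UNIV (\<lambda>_. borel))))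
      (sets (vimage_algebra (space M) (\<lambda>\<omega> j. I j \<omega>) (Pi\<^sub>M UNIV (\<lambda>_. count_space UNIV))))"
begin

abbreviation bandwidth :: "nat \<Rightarrow> 'a \<Rightarrow> real"
  where "bandwidth j \<omega> \<equiv> dsms_h hmin hmax \<nu> h1 (\<lambda>m. U m \<omega>) j"

abbreviation state
  where "state j \<omega> \<equiv> dsms_X k' hmin hmax \<nu> h1 X0 (\<lambda>m. U m \<omega>) (\<lambda>m. I m \<omega>) j"

abbreviation history :: "nat \<Rightarrow> 'a measure"
  where "history j \<equiv> vimage_algebra (space M) (\<lambda>\<omega>. \<lambda>i\<in>{..j}. (state i \<omega>, bandwidth i \<omega>))
    (Pi\<^sub>M {..j} (\<lambda>_. borel))"

definition noise_coeff :: "nat \<Rightarrow> 'a \<Rightarrow> real"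
  where "noise_coeff j \<omega> =
    bandwidth_delta hmin hmax (\<nu> j) (bandwidth j \<omega>) * cost_slope k' (bandwidth j \<omega>) (state j \<omega>)"

lemma AE_U_bounded: "AE \<omega> in M. \<forall>m. \<bar>U m \<omega>\<bar> < 1"
  using uniform_pm1_bounded_centred(1)[OF U_measurable U_uniform]
  by (simp add: AE_all_countable abs_less_iff)

lemma borel_measurable_state_bandwidth:
  assumes "\<And>m. m < j \<Longrightarrow> U m \<in> borel_measurable N"
    and "\<And>m. m < j \<Longrightarrow> I m \<in> measurable N (count_space UNIV)"
  shows "(\<lambda>\<omega>. (state j \<omega>, bandwidth j \<omega>)) \<in> borel_measurable N"
  using borel_measurable_dsms_X[OF profile assms] borel_measurable_dsms_h[OF assms(1)]
  by (simp add: borel_measurable_Pair_iff)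

lemma borel_measurable_cost_state:
  assumes "(\<lambda>\<omega>. (state j \<omega>, bandwidth j \<omega>)) \<in> borel_measurable N"
  shows "(\<lambda>\<omega>. cost k (bandwidth j \<omega>) (state j \<omega>)) \<in> borel_measurable N"
  using assms by (intro borel_measurable_cost[OF profile]) (simp_all add: borel_measurable_Pair_iff)

lemma borel_measurable_noise_coeff:
  assumes "(\<lambda>\<omega>. (state j \<omega>, bandwidth j \<omega>)) \<in> borel_measurable N"
  shows "noise_coeff j \<in> borel_measurable N"
proof -
  have [measurable]: "(\<lambda>\<omega>. state j \<omega>) \<in> borel_measurable N"
    and [measurable]: "(\<lambda>\<omega>. bandwidth j \<omega>) \<in> borel_measurable N"
    using assms by (simp_all add: borel_measurable_Pair_iff)
  have [measurable]: "(\<lambda>\<omega>. cost_slope k' (bandwidth j \<omega>) (state j \<omega>)) \<in> borel_measurable N"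
    by (rule borel_measurable_cost_slope[OF profile]) measurable
  show ?thesis
    unfolding noise_coeff_def[abs_def] bandwidth_delta_def by measurable
qed

lemma sets_history_subset:
  assumes "space N = space M"
    and "\<And>i. i \<le> j \<Longrightarrow> (\<lambda>\<omega>. (state i \<omega>, bandwidth i \<omega>)) \<in> borel_measurable N"
  shows "sets (history j) \<subseteq> sets N"
  by (rule sets_image_in_sets[OF assms(1)]) (use assms(2) in \<open>auto intro!: measurable_restrict\<close>)

lemma borel_measurable_history:
  assumes "i \<le> j"
  shows "(\<lambda>\<omega>. (state i \<omega>, bandwidth i \<omega>)) \<in> borel_measurable (history j)"
proof -
  have "(\<lambda>\<omega>. \<lambda>i\<in>{..j}. (state i \<omega>, bandwidth i \<omega>))
      \<in> measurable (history j) (Pi\<^sub>M {..j} (\<lambda>_. borel))"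
    by (rule measurable_vimage_algebra1) (auto simp: space_PiM)
  from measurable_compose[OF this measurable_component_singleton[of i]]
  show ?thesis
    using assms by (simp add: comp_def)
qed

lemma borel_measurable_state_bandwidth_M: "(\<lambda>\<omega>. (state j \<omega>, bandwidth j \<omega>)) \<in> borel_measurable M"
  by (rule borel_measurable_state_bandwidth) (rule U_measurable, rule I_measurable)

lemma subalgebra_history: "subalgebra M (history j)"
proof -
  have "sets (history j) \<subseteq> sets M"
    by (rule sets_history_subset[OF refl borel_measurable_state_bandwidth_M])
  then show ?thesis
    by (simp add: subalgebra_def)
qed

lemma integrable_cost: "integrable M (\<lambda>\<omega>. cost k (bandwidth j \<omega>) (state j \<omega>))"
proof (rule integrable_const_bound)
  show "AE \<omega> in M. norm (cost k (bandwidth j \<omega>) (state j \<omega>)) \<le> real (card {(a::'n, b). a \<le> b}) * k 0"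
    by (intro AE_I2) (simp add: abs_of_nonneg cost_nonneg[OF profile] cost_le[OF profile])
  show "(\<lambda>\<omega>. cost k (bandwidth j \<omega>) (state j \<omega>)) \<in> borel_measurable M"
    by (rule borel_measurable_cost_state[OF borel_measurable_state_bandwidth_M])
qed

lemma AE_abs_noise_coeff_le: "AE \<omega> in M. \<bar>noise_coeff j \<omega>\<bar> \<le> real (card {(a::'n, b). a \<le> b}) * k 0"
  using AE_U_bounded
proof eventually_elim
  case (elim \<omega>)
  have "hmin \<le> bandwidth j \<omega>" "bandwidth j \<omega> \<le> hmax"
    using dsms_h_bounds[OF hmin_pos h1_bounds \<nu>_nonneg elim] by auto
  note \<delta> = bandwidth_delta_bounds[OF hmin_pos this \<nu>_nonneg[rule_format, of j]]
  have "\<bar>bandwidth_delta hmin hmax (\<nu> j) (bandwidth j \<omega>)\<bar> \<le> 1"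
    using \<delta>(1,4) by simp
  from mult_mono[OF this abs_cost_slope_le[OF profile]] show ?case
    unfolding noise_coeff_def abs_mult by simp
qed

lemma AE_cost_step_ge:
  assumes "1 \<le> j"
  shows "AE \<omega> in M. cost k (bandwidth j \<omega>) (state j \<omega>) - noise_coeff j \<omega> * U j \<omega>
    \<le> cost k (bandwidth (Suc j) \<omega>) (state (Suc j) \<omega>)"
  using AE_U_bounded
proof eventually_elim
  case (elim \<omega>)
  from dsms_cost_step_ge[OF profile hmin_pos h1_bounds \<nu>_nonneg elim assms, where ?X0.0 = X0 and ii = "\<lambda>m. I m \<omega>"]
  show ?case
    by (simp add: noise_coeff_def mult_ac)
qed

lemma cost_le_cond_exp:
  assumes j: "1 \<le> j" and F: "subalgebra M F"
    and meas: "(\<lambda>\<omega>. (state j \<omega>, bandwidth j \<omega>)) \<in> borel_measurable F"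
    and indep: "\<And>g. g \<in> borel_measurable F \<Longrightarrow> indep_var borel (U j) borel g"
  shows "AE \<omega> in M. cost k (bandwidth j \<omega>) (state j \<omega>)
    \<le> real_cond_exp M F (\<lambda>\<omega>. cost k (bandwidth (Suc j) \<omega>) (state (Suc j) \<omega>)) \<omega>"
proof -
  interpret F: sigma_finite_subalgebra M F
    by (rule sigma_finite_subalgebra_of_subalgebra[OF F])
  have coeff_F_measurable: "noise_coeff j \<in> borel_measurable F"
    by (rule borel_measurable_noise_coeff[OF meas])
  have coeff_integrable: "integrable M (noise_coeff j)"
    using AE_abs_noise_coeff_le measurable_from_subalg[OF F coeff_F_measurable]
    by (intro integrable_const_bound[where B = "real (card {(a::'n, b). a \<le> b}) * k 0"]) simp_all
  then have coeff_indicator_integrable: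
      "integrable M (\<lambda>\<omega>. indicator A \<omega> * noise_coeff j \<omega>)" if "A \<in> sets F" for A
    using integrable_real_mult_indicator[of A M "noise_coeff j"] that F by (auto simp: subalgebra_def mult_ac)
  note U_j = uniform_pm1_bounded_centred(2,3)[OF U_measurable U_uniform, of j]
  show ?thesis
  proof (rule F.real_cond_exp_ge_of_le_centred[where D = "\<lambda>\<omega>. - (noise_coeff j \<omega> * U j \<omega>)"])
    show "(\<lambda>\<omega>. cost k (bandwidth j \<omega>) (state j \<omega>)) \<in> borel_measurable F"
      by (rule borel_measurable_cost_state[OF meas])
    show "integrable M (\<lambda>\<omega>. - (noise_coeff j \<omega> * U j \<omega>))"
      using indep_var_integrable[OF indep[OF coeff_F_measurable] U_j(1) coeff_integrable]
      by (simp add: mult.commute)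
    show "(\<integral>\<omega>. indicator A \<omega> * - (noise_coeff j \<omega> * U j \<omega>) \<partial>M) = 0" if "A \<in> sets F" for A
    proof -
      have "indep_var borel (U j) borel (\<lambda>\<omega>. indicator A \<omega> * noise_coeff j \<omega>)"
        by (rule indep[OF borel_measurable_times[OF borel_measurable_indicator[OF that] coeff_F_measurable]])
      from indep_var_lebesgue_integral[OF this U_j(1) coeff_indicator_integrable[OF that]]
      show ?thesis
        by (simp add: U_j(2) mult_ac)
    qed
    show "AE \<omega> in M. cost k (bandwidth j \<omega>) (state j \<omega>) + - (noise_coeff j \<omega> * U j \<omega>)
        \<le> cost k (bandwidth (Suc j) \<omega>) (state (Suc j) \<omega>)"
      using AE_cost_step_ge[OF j] by simp
  qed (rule integrable_cost)+
qed

lemma cost_le_cond_exp_of_history: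
  assumes j: "1 \<le> j" and F: "subalgebra M F"
    and meas: "(\<lambda>\<omega>. (state j \<omega>, bandwidth j \<omega>)) \<in> borel_measurable F"
    and F_history: "sets F \<subseteq> sets (history j)"
  shows "AE \<omega> in M. cost k (bandwidth j \<omega>) (state j \<omega>)
    \<le> real_cond_exp M F (\<lambda>\<omega>. cost k (bandwidth (Suc j) \<omega>) (state (Suc j) \<omega>)) \<omega>"
proof -
  obtain N where N: "subalgebra M N" and U_N: "\<And>m. m < j \<Longrightarrow> U m \<in> borel_measurable N"
    and I_N: "\<And>m. I m \<in> measurable N (count_space UNIV)"
    and indep: "\<And>g :: 'a \<Rightarrow> real. g \<in> borel_measurable N \<Longrightarrow> indep_var borel (U j) borel g"
    using indep_var_past[OF U_indep UI_indep, where j = j] by blast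
  have "sets (history j) \<subseteq> sets N"
    using N U_N I_N by (intro sets_history_subset borel_measurable_state_bandwidth) (auto simp: subalgebra_def)
  then have "subalgebra N F"
    using F F_history N by (auto simp: subalgebra_def)
  show ?thesis
    by (rule cost_le_cond_exp[OF j F meas indep[OF measurable_from_subalg[OF \<open>subalgebra N F\<close>]]])
qed

lemma submartingale_cost: "submartingale_from M 1 history (\<lambda>j \<omega>. cost k (bandwidth j \<omega>) (state j \<omega>))"
  unfolding submartingale_from_def
proof (intro conjI allI impI)
  fix j :: nat
  assume j: "1 \<le> j"
  show "sigma_finite_subalgebra M (history j)"
    by (rule sigma_finite_subalgebra_of_subalgebra[OF subalgebra_history])
  show "sets (history j) \<subseteq> sets (history (Suc j))"
    by (rule sets_history_subset) (auto intro: borel_measurable_history)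
  show "(\<lambda>\<omega>. cost k (bandwidth j \<omega>) (state j \<omega>)) \<in> borel_measurable (history j)"
    by (rule borel_measurable_cost_state[OF borel_measurable_history]) simp
  show "integrable M (\<lambda>\<omega>. cost k (bandwidth j \<omega>) (state j \<omega>))"
    by (rule integrable_cost)
  show "AE \<omega> in M. cost k (bandwidth j \<omega>) (state j \<omega>)
      \<le> real_cond_exp M (history j) (\<lambda>\<omega>. cost k (bandwidth (Suc j) \<omega>) (state (Suc j) \<omega>)) \<omega>"
    by (rule cost_le_cond_exp_of_history[OF j subalgebra_history borel_measurable_history]) simp_all
qed

lemma cost_le_cond_exp_state:
  assumes j: "1 \<le> j"
  shows "AE \<omega> in M. real_cond_exp M (vimage_algebra (space M) (\<lambda>\<omega>. (state j \<omega>, bandwidth j \<omega>)) borel)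
      (\<lambda>\<omega>. cost k (bandwidth (Suc j) \<omega>) (state (Suc j) \<omega>)) \<omega> \<ge> cost k (bandwidth j \<omega>) (state j \<omega>)"
proof (rule cost_le_cond_exp_of_history[OF j])
  have meas_M: "(\<lambda>\<omega>. (state j \<omega>, bandwidth j \<omega>)) \<in> borel_measurable M"
    by (intro borel_measurable_state_bandwidth U_measurable I_measurable)
  then show "subalgebra M (vimage_algebra (space M) (\<lambda>\<omega>. (state j \<omega>, bandwidth j \<omega>)) borel)"
    unfolding subalgebra_def using sets_image_in_sets[OF refl meas_M] by simp
  show "(\<lambda>\<omega>. (state j \<omega>, bandwidth j \<omega>))
      \<in> borel_measurable (vimage_algebra (space M) (\<lambda>\<omega>. (state j \<omega>, bandwidth j \<omega>)) borel)"
    by (rule measurable_vimage_algebra1) simp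
  show "sets (vimage_algebra (space M) (\<lambda>\<omega>. (state j \<omega>, bandwidth j \<omega>)) borel) \<subseteq> sets (history j)"
    by (rule sets_image_in_sets[OF _ borel_measurable_history]) simp_all
qed

end

theorem proposition2:
  fixes k k' :: "real \<Rightarrow> real"
    and hmin hmax h1 :: real
    and \<nu> :: "nat \<Rightarrow> real"
    and X0 :: "('d::euclidean_space)^('n::{finite,linorder})"
    and M :: "'a measure"
    and U :: "nat \<Rightarrow> 'a \<Rightarrow> real"
    and I :: "nat \<Rightarrow> 'a \<Rightarrow> 'n"
  defines "h \<equiv> (\<lambda>j \<omega>. dsms_h hmin hmax \<nu> h1 (\<lambda>m. U m \<omega>) j)"
    and "X \<equiv> (\<lambda>j \<omega>. dsms_X k' hmin hmax \<nu> h1 X0 (\<lambda>m. U m \<omega>) (\<lambda>m. I m \<omega>) j)"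
  assumes prof: "profile k k'"
    and hmin: "0 < hmin" and hmm: "hmin < hmax"
    and h1: "hmin \<le> h1" "h1 \<le> hmax"
    and \<nu>_nonneg: "\<forall>j. \<nu> j \<ge> 0" and \<nu>_lim: "\<nu> \<longlonglongrightarrow> 0"
    and P: "prob_space M"
    and U_rv: "\<forall>j. U j \<in> borel_measurable M"
    and U_unif: "\<forall>j. distr M borel (U j) = uniform_measure lborel {-1<..<1}"
    and I_rv: "\<forall>j. I j \<in> measurable M (count_space UNIV)"
    and I_unif: "\<forall>j i. prob_space.prob M {\<omega> \<in> space M. I j \<omega> = i} = 1 / real CARD('n)"
    and U_indep: "prob_space.indep_vars M (\<lambda>_. borel) U UNIV"
    and I_indep: "prob_space.indep_vars M (\<lambda>_. count_space UNIV) I UNIV"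
    and UI_indep: "prob_space.indep_set M
                     (sets (vimage_algebra (space M) (\<lambda>\<omega> j. U j \<omega>) (Pi\<^sub>M UNIV (\<lambda>_. borel))))
                     (sets (vimage_algebra (space M) (\<lambda>\<omega> j. I j \<omega>) (Pi\<^sub>M UNIV (\<lambda>_. count_space UNIV))))"
  shows "(\<forall>j\<ge>1. AE \<omega> in M.
            real_cond_exp M
              (vimage_algebra (space M) (\<lambda>\<omega>. (X j \<omega>, h j \<omega>)) borel)
              (\<lambda>\<omega>. cost k (h (Suc j) \<omega>) (X (Suc j) \<omega>)) \<omega>
            \<ge> cost k (h j \<omega>) (X j \<omega>))
       \<and> (\<forall>j \<omega>. cost k (h j \<omega>) (X j \<omega>) \<ge> 0)
       \<and> submartingale_from M 1
           (\<lambda>j. vimage_algebra (space M) (\<lambda>\<omega>. \<lambda>i\<in>{..j}. (X i \<omega>, h i \<omega>))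
                  (Pi\<^sub>M {..j} (\<lambda>_. borel)))
           (\<lambda>j \<omega>. cost k (h j \<omega>) (X j \<omega>))"
proof -
  \<comment> \<open>Of the indices only measurability is used, and neither \<open>\<nu> \<longlonglongrightarrow> 0\<close> nor
      \<open>hmin < hmax\<close> is needed: the mean-shift update does not decrease the cost whichever
      index is drawn.\<close>
  interpret dsms M k k' hmin hmax h1 \<nu> X0 U I
    using P prof hmin h1 \<nu>_nonneg U_rv U_unif I_rv U_indep UI_indep
    by (simp add: dsms_def dsms_axioms_def)
  show ?thesis
    unfolding h_def X_def
    by (intro conjI allI impI cost_le_cond_exp_state cost_nonneg[OF prof] submartingale_cost)
qed

end
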